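(* Let $G$ be a $3$-dimensional unimodular Lie group, with Lie algebra $\mathfrak{g}$. There is a left-invariant $B_{3}$-generalized pseudo-Kähler structure $(\mathcal{G}, \mathcal F)$ on a Courant algebroid $E= E_{H, F}$ of type $B_3$ over $G$, with components $(g, J_{+}, J_{-}, X_{+}, X_{-})$, such that the operator $L\in \mathrm{End}(\mathfrak{g})$ associated to $g$ is diagonalizable, if and only if one of the following two cases holds: i) there is a $g$-orthonormal basis $\{ v_{1}, v_{2}, v_{3} \}$ of $\mathfrak{g}$, such that $g(v_{2}, v_{2}) =1$, in which the Lie bracket of $\mathfrak{g}$ is given by \[ [v_{1}, v_{2} ] = \epsilon_{3} \lambda v_{3},\quad [ v_{3}, v_{1} ] =0,\quad [v_{2}, v_{3} ] = \epsilon_{1}\lambda v_{1}, \] where $\epsilon_{i}:= g( v_{i}, v_{i})\in \{ \pm 1\}$ ($i\in \{ 1,3\}$), $\lambda \in \mathbb{R}\setminus \{ 0\}$, $X_{-} = v_{2}$ and $X_{+} = \pm X_{-}$. In particular, $\mathfrak g$ is isomorphic to the Lie algebra of Killing fields of Euclidean or Minkowskian $2$-space, $\mathfrak{g}\cong \mathfrak{iso}(2)= \mathfrak{so}(2) \ltimes \mathbb{R}^2$ or $\mathfrak{g} \cong \mathfrak{iso}(1,1)=\mathfrak{so}(1,1)\ltimes \mathbb{R}^2$, depending on whether $\epsilon_1\epsilon_3=1$ or $\epsilon_1\epsilon_3=-1$. ii) $\mathfrak{g}$ is abelian, $g$ is an arbitrary (non-degenerate) metric on $\mathfrak{g}$ and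 $X_{\pm}\in \mathfrak{g}$ are arbitrary space-like unit vectors, i.e. $g(X_\pm ,X_\pm )=1$. In both cases $H =0$, $F =0$ and $J_{\pm}\in \mathrm{End} (\mathfrak{g})$ are arbitrary $g$-skew-symmetric endomorphisms, which satisfy $J_{\pm}X_{\pm} =0$ and are complex structures on $X_{\pm}^{\perp}$.
   Context: A Courant algebroid $E_{H,F}$ of type $B_n$ over an $n$-dimensional manifold $M$ is $TM\oplus T^*M\oplus\mathbb{R}$ with scalar product $\langle X+\xi+\lambda, Y+\eta+\mu\rangle=\frac12(\eta(X)+\xi(Y))+\lambda\mu$, anchor the projection to $TM$, and Dorfman bracket twisted by a closed $2$-form $F$ and a $3$-form $H$ with $dH=-F\wedge F$. A $B_n$-generalized pseudo-Kähler structure $(\mathcal{G},\mathcal F)$ is a generalized metric $\mathcal G$ together with a $B_n$-generalized almost complex structure $\mathcal F$ commuting with $\mathcal G^{\mathrm{end}}$, such that $\mathcal F$ and $\mathcal G^{\mathrm{end}}\mathcal F$ are integrable. For $n$ odd (here $n=3$), with $\mathcal G$ in standard form, such a structure is encoded by its components $(g,J_+,J_-,X_+,X_-)$: $g$ a pseudo-Riemannian metric on $M$, $J_\pm$ $g$-skew-symmetric endomorphisms of $TM$, $X_\pm$ vector fields with $g(X_\pm,X_\pm)=1$, $J_\pm X_\pm=0$, and $J_\pm$ restricted to the $g$-orthogonal complement $X_\pm^\perp$ a complex structure. On a Lie group $G$, $E_{H,F}$ is left-invariant if $H,F$ are left-invariant, and the structure is left-invariant if moreover its components are left-invariant tensor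 fields (identified with tensors on $\mathfrak g$). For a $3$-dimensional Lie algebra $\mathfrak g$ with non-degenerate metric $g$ and a chosen orientation, the canonical operator $L\in\mathrm{End}(\mathfrak g)$ is defined by $[u,v]=L(u\times v)$ for all $u,v\in\mathfrak g$, where $\times$ is the cross product determined by $g$ and the orientation ($L$ is unique up to sign); $\mathfrak g$ is unimodular iff $L$ is self-adjoint. *)

theory Defs
  imports "HOL-Analysis.Analysis"
begin

text \<open>
  Everything is left-invariant, hence encoded on the Lie algebra g = R^3 (type real^3).
  Covectors (left-invariant 1-forms) are also encoded as elements of real^3, acting by the
  standard dot product: xi(X) = xi \<bullet> X.  Left-invariant sections of E = TM + T*M + R are
  therefore elements of real^3 \<times> real^3 \<times> real.
\<close>

type_synonym vec3 = "real^3"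
type_synonym sec = "vec3 \<times> vec3 \<times> real"

definition lie_algebra3 :: "(vec3 \<Rightarrow> vec3 \<Rightarrow> vec3) \<Rightarrow> bool" where
  "lie_algebra3 br \<longleftrightarrow> bilinear br \<and> (\<forall>x. br x x = 0) \<and>
     (\<forall>x y z. br x (br y z) + br y (br z x) + br z (br x y) = 0)"

definition unimodular3 :: "(vec3 \<Rightarrow> vec3 \<Rightarrow> vec3) \<Rightarrow> bool" where
  "unimodular3 br \<longleftrightarrow> (\<forall>x. trace (matrix (br x)) = 0)"

definition metric3 :: "real^3^3 \<Rightarrow> bool" where
  "metric3 Gm \<longleftrightarrow> transpose Gm = Gm \<and> invertible Gm"

definition gm :: "real^3^3 \<Rightarrow> vec3 \<Rightarrow> vec3 \<Rightarrow> real" where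
  "gm Gm u v = u \<bullet> (Gm *v v)"

text \<open>metric volume form for the standard orientation\<close>
definition vol_g :: "real^3^3 \<Rightarrow> vec3 \<Rightarrow> vec3 \<Rightarrow> vec3 \<Rightarrow> real" where
  "vol_g Gm u v w = det (vector [u, v, w] :: real^3^3) / sqrt \<bar>det Gm\<bar>"

text \<open>cross product: g(u \<times> v, w) = vol_g(u,v,w)\<close>
definition cross_g :: "real^3^3 \<Rightarrow> vec3 \<Rightarrow> vec3 \<Rightarrow> vec3" where
  "cross_g Gm u v = matrix_inv Gm *v (\<chi> k. vol_g Gm u v (axis k 1))"

definition canonical_L :: "(vec3 \<Rightarrow> vec3 \<Rightarrow> vec3) \<Rightarrow> real^3^3 \<Rightarrow> vec3 \<Rightarrow> vec3" where
  "canonical_L br Gm = (THE L. linear L \<and> (\<forall>u v. br u v = L (cross_g Gm u v)))"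

definition diagonalizable3 :: "(vec3 \<Rightarrow> vec3) \<Rightarrow> bool" where
  "diagonalizable3 L \<longleftrightarrow> (\<exists>v :: 3 \<Rightarrow> vec3. inj v \<and> independent (range v) \<and>
      (\<forall>i. \<exists>c. L (v i) = c *\<^sub>R v i))"

definition alt2 :: "(vec3 \<Rightarrow> vec3 \<Rightarrow> real) \<Rightarrow> bool" where
  "alt2 F \<longleftrightarrow> bilinear F \<and> (\<forall>x. F x x = 0)"

definition alt3 :: "(vec3 \<Rightarrow> vec3 \<Rightarrow> vec3 \<Rightarrow> real) \<Rightarrow> bool" where
  "alt3 H \<longleftrightarrow> (\<forall>x y. linear (\<lambda>z. H x y z)) \<and> (\<forall>x z. linear (\<lambda>y. H x y z)) \<and>
     (\<forall>y z. linear (\<lambda>x. H x y z)) \<and> (\<forall>x z. H x x z = 0) \<and> (\<forall>x y. H x y y = 0)"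

text \<open>dF = 0 for a left-invariant 2-form (Chevalley-Eilenberg differential)\<close>
definition closed2 :: "(vec3 \<Rightarrow> vec3 \<Rightarrow> vec3) \<Rightarrow> (vec3 \<Rightarrow> vec3 \<Rightarrow> real) \<Rightarrow> bool" where
  "closed2 br F \<longleftrightarrow> (\<forall>x y z. F (br x y) z + F (br y z) x + F (br z x) y = 0)"

definition pairing :: "sec \<Rightarrow> sec \<Rightarrow> real" where
  "pairing u v = (case u of (X, xi, l) \<Rightarrow> case v of (Y, eta, m) \<Rightarrow>
      (eta \<bullet> X + xi \<bullet> Y) / 2 + l * m)"

text \<open>Twisted Dorfman bracket of left-invariant sections (all functions constant, so the
  terms X(m), Y(l), l dm vanish; L_X eta = i_X d eta; d xi (A,B) = - xi([A,B])).\<close>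
definition dorfman :: "(vec3 \<Rightarrow> vec3 \<Rightarrow> vec3) \<Rightarrow> (vec3 \<Rightarrow> vec3 \<Rightarrow> vec3 \<Rightarrow> real)
    \<Rightarrow> (vec3 \<Rightarrow> vec3 \<Rightarrow> real) \<Rightarrow> sec \<Rightarrow> sec \<Rightarrow> sec" where
  "dorfman br H F u v = (case u of (X, xi, l) \<Rightarrow> case v of (Y, eta, m) \<Rightarrow>
      (br X Y,
       (\<chi> k. - (eta \<bullet> br X (axis k 1)) + xi \<bullet> br Y (axis k 1) + H X Y (axis k 1)
             + 2 * m * F X (axis k 1) - 2 * l * F Y (axis k 1)),
       - F X Y))"

definition gen_metric :: "(sec \<Rightarrow> sec) \<Rightarrow> bool" where
  "gen_metric Ge \<longleftrightarrow> linear Ge \<and> (\<forall>u. Ge (Ge u) = u) \<and>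
     (\<forall>u v. pairing (Ge u) v = pairing u (Ge v))"

definition std_gen_metric :: "real^3^3 \<Rightarrow> sec \<Rightarrow> sec" where
  "std_gen_metric Gm u = (case u of (X, xi, l) \<Rightarrow> (matrix_inv Gm *v xi, Gm *v X, l))"

definition Bn_gacs :: "(sec \<Rightarrow> sec) \<Rightarrow> bool" where
  "Bn_gacs P \<longleftrightarrow> linear P \<and> (\<forall>u v. pairing (P u) v = - pairing u (P v)) \<and>
     (\<forall>u. P (P (P u)) = - P u) \<and> dim {u. P u = 0} = 1 \<and>
     (\<forall>u. P u = 0 \<and> u \<noteq> 0 \<longrightarrow> pairing u u \<noteq> 0)"

text \<open>Integrability: the +i-eigenbundle L = {x - i P x | x \<in> range P} of the complexification
  is closed under the (complexified) Dorfman bracket; written out in real terms.\<close>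
definition Bn_integrable :: "(vec3 \<Rightarrow> vec3 \<Rightarrow> vec3) \<Rightarrow> (vec3 \<Rightarrow> vec3 \<Rightarrow> vec3 \<Rightarrow> real)
    \<Rightarrow> (vec3 \<Rightarrow> vec3 \<Rightarrow> real) \<Rightarrow> (sec \<Rightarrow> sec) \<Rightarrow> bool" where
  "Bn_integrable br H F P \<longleftrightarrow> (\<forall>x y. x \<in> range P \<and> y \<in> range P \<longrightarrow>
     (let w = dorfman br H F x y - dorfman br H F (P x) (P y) in
        w \<in> range P \<and> P w = dorfman br H F (P x) y + dorfman br H F x (P y)))"

definition Bn_gen_pseudo_Kahler :: "(vec3 \<Rightarrow> vec3 \<Rightarrow> vec3) \<Rightarrow> (vec3 \<Rightarrow> vec3 \<Rightarrow> vec3 \<Rightarrow> real)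
    \<Rightarrow> (vec3 \<Rightarrow> vec3 \<Rightarrow> real) \<Rightarrow> (sec \<Rightarrow> sec) \<Rightarrow> (sec \<Rightarrow> sec) \<Rightarrow> bool" where
  "Bn_gen_pseudo_Kahler br H F Ge P \<longleftrightarrow> gen_metric Ge \<and> Bn_gacs P \<and> Ge \<circ> P = P \<circ> Ge \<and>
     Bn_integrable br H F P \<and> Bn_integrable br H F (Ge \<circ> P)"

definition components_ok :: "real^3^3 \<Rightarrow> real^3^3 \<Rightarrow> real^3^3 \<Rightarrow> vec3 \<Rightarrow> vec3 \<Rightarrow> bool" where
  "components_ok Gm Jp Jm Xp Xm \<longleftrightarrow> metric3 Gm \<and>
     (\<forall>u v. gm Gm (Jp *v u) v = - gm Gm u (Jp *v v)) \<and>
     (\<forall>u v. gm Gm (Jm *v u) v = - gm Gm u (Jm *v v)) \<and>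
     gm Gm Xp Xp = 1 \<and> gm Gm Xm Xm = 1 \<and> Jp *v Xp = 0 \<and> Jm *v Xm = 0 \<and>
     (\<forall>u. gm Gm u Xp = 0 \<longrightarrow> Jp *v (Jp *v u) = - u) \<and>
     (\<forall>u. gm Gm u Xm = 0 \<longrightarrow> Jm *v (Jm *v u) = - u)"

text \<open>With V_+ = {X + gX + l} and V_- = {X - gX}: on V_-, F(X - gX) = J_-X - gJ_-X;
  on V_+, F(X + gX) = J_+X + gJ_+X - g(X_+,X), F(1) = X_+ + gX_+.
  A section (X, xi, l) decomposes as (A + gA) + (B - gB) + l with
  A = (X + g^{-1}xi)/2, B = (X - g^{-1}xi)/2.\<close>
definition struct_of_components :: "real^3^3 \<Rightarrow> real^3^3 \<Rightarrow> real^3^3 \<Rightarrow> vec3 \<Rightarrow> vec3 \<Rightarrow> sec \<Rightarrow> sec" where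
  "struct_of_components Gm Jp Jm Xp Xm u = (case u of (X, xi, l) \<Rightarrow>
     (let A = (1/2) *\<^sub>R (X + matrix_inv Gm *v xi); B = (1/2) *\<^sub>R (X - matrix_inv Gm *v xi) in
       (Jp *v A + Jm *v B + l *\<^sub>R Xp,
        Gm *v (Jp *v A - Jm *v B + l *\<^sub>R Xp),
        - gm Gm Xp A)))"

end

theory Submission
  imports Defs
begin

text \<open>
  The generalized metric splits \<open>E\<close> as \<open>V\<^sub>+ \<oplus> \<real> \<oplus> V\<^sub>-\<close>; the structure acts on \<open>V\<^sub>-\<close> by
  \<open>J\<^sub>-\<close>, on \<open>V\<^sub>+ \<oplus> \<real>\<close> through \<open>J\<^sub>+\<close> and \<open>X\<^sub>+\<close>, and its kernel is spanned by \<open>X\<^sub>- - gX\<^sub>-\<close>.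
  Integrability then becomes two identities for pairings of Dorfman brackets with arbitrary
  sections.  Composing with the generalized metric flips the sign of \<open>J\<^sub>-\<close>, so for a
  pseudo-Kaehler structure the identities hold for \<open>J\<^sub>-\<close> and \<open>-J\<^sub>-\<close> alike, and their
  \<open>J\<^sub>-\<close>-free parts must vanish.  Written out in an orthonormal frame
  \<open>(v\<^sub>1, X\<^sub>-, J\<^sub>-v\<^sub>1)\<close> and combined with unimodularity, they force \<open>H = 0\<close>, \<open>F = 0\<close> and
  \<open>[v\<^sub>1, X\<^sub>-] = \<epsilon>\<lambda> J\<^sub>-v\<^sub>1\<close>, \<open>[X\<^sub>-, J\<^sub>-v\<^sub>1] = \<epsilon>\<lambda> v\<^sub>1\<close>, \<open>[J\<^sub>-v\<^sub>1, v\<^sub>1] = 0\<close>; unless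
  \<open>X\<^sub>+ = \<plusminus>X\<^sub>-\<close> they also force \<open>\<lambda> = 0\<close>.  Conversely, for such brackets and \<open>H = F = 0\<close> both
  identities reduce to polynomial identities in the frame coordinates.
\<close>

lemma matrix_vector_mult_uminus_right [simp]: "(A::real^'n^'m) *v (- x) = - (A *v x)"
  using matrix_vector_mult_diff_distrib[of A 0 x] by simp

lemma matrix_vector_mult_uminus_left [simp]: "(- (A::real^'n^'m)) *v x = - (A *v x)"
  by (simp add: matrix_vector_mult_def vec_eq_iff sum_negf)

lemma gm_add_left [simp]: "gm G (x + y) z = gm G x z + gm G y z"
  and gm_add_right [simp]: "gm G x (y + z) = gm G x y + gm G x z"
  and gm_scaleR_left [simp]: "gm G (c *\<^sub>R x) z = c * gm G x z"
  and gm_scaleR_right [simp]: "gm G x (c *\<^sub>R z) = c * gm G x z"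
  and gm_minus_left [simp]: "gm G (- x) z = - gm G x z"
  and gm_minus_right [simp]: "gm G x (- z) = - gm G x z"
  and gm_diff_left [simp]: "gm G (x - y) z = gm G x z - gm G y z"
  and gm_diff_right [simp]: "gm G x (y - z) = gm G x y - gm G x z"
  and gm_zero_left [simp]: "gm G 0 z = 0"
  and gm_zero_right [simp]: "gm G x 0 = 0"
  unfolding gm_def
  by (simp_all add: inner_add_left inner_add_right matrix_vector_right_distrib
      matrix_vector_mult_diff_distrib inner_diff_left inner_diff_right matrix_vector_mult_scaleR)

lemma inner_linear_axis_expansion:
  assumes "linear f"
  shows "(\<chi> k. f (axis k 1)) \<bullet> (z::real^'n) = f z"
proof -
  have "f z = f (\<Sum>i\<in>UNIV. (z$i) *\<^sub>R axis i 1)"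
    using basis_expansion[of z] by (simp add: scalar_mult_eq_scaleR)
  also have "\<dots> = (\<Sum>i\<in>UNIV. (z$i) * f (axis i 1))"
    using assms by (simp add: linear_sum linear_scale)
  finally show ?thesis by (simp add: inner_vec_def mult.commute)
qed

lemma bilinear_alternating_skew:
  assumes "bilinear b" "\<forall>x. b x x = 0"
  shows "b y x = - b x y"
proof -
  have "b (x + y) (x + y) = 0" "b x x = 0" "b y y = 0" using assms by blast+
  then show ?thesis using assms(1)
    by (simp add: bilinear_ladd bilinear_radd algebra_simps eq_neg_iff_add_eq_0)
qed

lemma alt2_skew: "alt2 F \<Longrightarrow> F y x = - F x y"
  unfolding alt2_def using bilinear_alternating_skew by blast

lemma alt3_add1: "alt3 H \<Longrightarrow> H (x + x') y z = H x y z + H x' y z"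
  and alt3_add2: "alt3 H \<Longrightarrow> H x (y + y') z = H x y z + H x y' z"
  and alt3_add3: "alt3 H \<Longrightarrow> H x y (z + z') = H x y z + H x y z'"
  and alt3_scaleR1: "alt3 H \<Longrightarrow> H (c *\<^sub>R x) y z = c * H x y z"
  and alt3_scaleR2: "alt3 H \<Longrightarrow> H x (c *\<^sub>R y) z = c * H x y z"
  and alt3_scaleR3: "alt3 H \<Longrightarrow> H x y (c *\<^sub>R z) = c * H x y z"
  unfolding alt3_def
  by (auto simp: linear_add[of "\<lambda>x. H x y z"] linear_add[of "\<lambda>y. H x y z"]
      linear_add[of "\<lambda>z. H x y z"] linear_scale[of "\<lambda>x. H x y z"]
      linear_scale[of "\<lambda>y. H x y z"] linear_scale[of "\<lambda>z. H x y z"])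

lemma alt3_swap12:
  assumes "alt3 H"
  shows "H y x z = - H x y z"
proof -
  have "H (x + y) (x + y) z = 0" "H x x z = 0" "H y y z = 0"
    using assms unfolding alt3_def by blast+
  then show ?thesis using assms by (simp add: alt3_add1 alt3_add2)
qed

lemma alt3_swap23:
  assumes "alt3 H"
  shows "H x z y = - H x y z"
proof -
  have "H x (y + z) (y + z) = 0" "H x y y = 0" "H x z z = 0"
    using assms unfolding alt3_def by blast+
  then show ?thesis using assms by (simp add: alt3_add2 alt3_add3)
qed

lemma alt3_cyclic: "alt3 H \<Longrightarrow> H z x y = H x y z"
  using alt3_swap12[of H x z y] alt3_swap23[of H x y z] by simp

lemma alt3_repeated: "alt3 H \<Longrightarrow> H x x z = 0" "alt3 H \<Longrightarrow> H x y y = 0" "alt3 H \<Longrightarrow> H x y x = 0"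
  using alt3_swap23[of H x x y] unfolding alt3_def by auto

lemma pairing_add_left: "pairing (a + b) z = pairing a z + pairing b z"
  by (cases a, cases b, cases z) (simp add: pairing_def inner_add_left inner_add_right field_simps)

lemma pairing_diff_left: "pairing (a - b) z = pairing a z - pairing b z"
  by (cases a, cases b, cases z) (simp add: pairing_def inner_diff_left inner_diff_right field_simps)

lemma pairing_uminus_right: "pairing a (- z) = - pairing a z"
  by (cases a, cases z) (simp add: pairing_def field_simps)

lemma pairing_zero_right: "pairing u 0 = 0"
  by (cases u) (simp add: pairing_def zero_prod_def)

lemma pairing_eqI:
  assumes "\<And>z. pairing a z = pairing b z"
  shows "a = b"
proof -
  obtain X xi l where d: "a - b = (X, xi, l)" by (cases "a - b") auto
  have "pairing (a - b) (xi, X, l) = 0" using assms by (simp add: pairing_diff_left)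
  then have "X \<bullet> X + (xi \<bullet> xi + 2 * (l * l)) = 0"
    unfolding d pairing_def by (simp add: inner_commute field_simps)
  then have "X \<bullet> X = 0" "xi \<bullet> xi = 0" "l * l = 0"
    by (simp_all add: add_nonneg_eq_0_iff)
  then have "a - b = 0" unfolding d by (simp add: zero_prod_def)
  then show ?thesis by simp
qed

lemma pairing_dorfman:
  assumes br: "bilinear br" and H: "alt3 H" and F: "alt2 F"
  shows "pairing (dorfman br H F (X, xi, l) (Y, eta, m)) (Z, zeta, n) =
    (zeta \<bullet> br X Y - eta \<bullet> br X Z + xi \<bullet> br Y Z + H X Y Z) / 2
     + m * F X Z - l * F Y Z - n * F X Y"
proof -
  let ?f = "\<lambda>z. - (eta \<bullet> br X z) + xi \<bullet> br Y z + H X Y z + 2 * m * F X z - 2 * l * F Y z"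
  have lbr: "linear (br a)" for a using br unfolding bilinear_def by blast
  have lF: "linear (F a)" for a using F unfolding alt2_def bilinear_def by blast
  have "linear ?f"
    by (rule linearI) (simp_all add: linear_add[OF lbr] linear_scale[OF lbr]
        linear_add[OF lF] linear_scale[OF lF] alt3_add3[OF H] alt3_scaleR3[OF H]
        algebra_simps)
  then have "(\<chi> k. ?f (axis k 1)) \<bullet> Z = ?f Z" by (rule inner_linear_axis_expansion)
  then show ?thesis
    unfolding dorfman_def pairing_def by (simp only: prod.case) (simp add: field_simps)
qed

lemma independent_triple_spans:
  fixes w1 w2 w3 :: vec3
  assumes ind: "\<And>a b c. a *\<^sub>R w1 + b *\<^sub>R w2 + c *\<^sub>R w3 = 0 \<Longrightarrow> a = 0 \<and> b = 0 \<and> c = 0"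
  obtains a b c where "x = a *\<^sub>R w1 + b *\<^sub>R w2 + c *\<^sub>R w3"
proof -
  define f where "f = (\<lambda>y::vec3. y$1 *\<^sub>R w1 + y$2 *\<^sub>R w2 + y$3 *\<^sub>R w3)"
  have lin: "linear f" unfolding f_def by (rule linearI) (simp_all add: algebra_simps)
  have "inj f" unfolding linear_injective_0[OF lin]
  proof (intro allI impI)
    fix y assume "f y = 0"
    then have "y$1 = 0 \<and> y$2 = 0 \<and> y$3 = 0" using ind unfolding f_def by blast
    then show "y = 0" by (simp add: vec_eq_iff forall_3)
  qed
  then obtain y where "x = f y" using linear_inj_imp_surj[OF lin] by (metis surjD)
  then show ?thesis using that unfolding f_def by blast
qed

section \<open>Sections in the splitting \<open>V\<^sub>+ \<oplus> \<real> \<oplus> V\<^sub>-\<close>\<close>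

text \<open>\<open>pm_section G A l B\<close> is the section \<open>(A + gA) + l + (B - gB)\<close>.\<close>
definition pm_section :: "real^3^3 \<Rightarrow> vec3 \<Rightarrow> real \<Rightarrow> vec3 \<Rightarrow> sec" where
  "pm_section G A l B = (A + B, G *v (A - B), l)"

locale nondeg_metric =
  fixes Gm :: "real^3^3"
  assumes metric: "metric3 Gm"
begin

lemma gm_commute: "gm Gm x y = gm Gm y x"
  using metric unfolding metric3_def gm_def
  by (metis dot_lmul_matrix inner_commute transpose_matrix_vector)

lemma matrix_inv_Gm: "Gm ** matrix_inv Gm = mat 1" "matrix_inv Gm ** Gm = mat 1"
  using metric someI_ex[of "\<lambda>B. Gm ** B = mat 1 \<and> B ** Gm = mat 1"]
  unfolding metric3_def invertible_def matrix_inv_def by auto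

lemma matrix_inv_Gm_cancel [simp]:
  "matrix_inv Gm *v (Gm *v x) = x" "Gm *v (matrix_inv Gm *v x) = x"
  by (simp_all add: matrix_vector_mul_assoc matrix_inv_Gm)

lemma inner_Gm_left: "(Gm *v a) \<bullet> b = gm Gm a b"
  unfolding gm_def by (metis gm_commute gm_def inner_commute)

lemma gm_nondegenerate:
  assumes "\<And>y. gm Gm x y = 0"
  shows "x = 0"
proof -
  have "gm Gm x (matrix_inv Gm *v x) = 0" using assms .
  then show ?thesis unfolding gm_def by simp
qed

lemma gm_eq_0_if_orthogonal_to_triple:
  assumes ind: "\<And>a b c. a *\<^sub>R w1 + b *\<^sub>R w2 + c *\<^sub>R w3 = 0 \<Longrightarrow> a = 0 \<and> b = 0 \<and> c = 0"
    and "gm Gm u w1 = 0" "gm Gm u w2 = 0" "gm Gm u w3 = 0"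
  shows "u = 0"
proof (rule gm_nondegenerate)
  fix y
  obtain a b c where "y = a *\<^sub>R w1 + b *\<^sub>R w2 + c *\<^sub>R w3"
    using independent_triple_spans[OF ind] .
  then show "gm Gm u y = 0" using assms(2-4) by simp
qed

lemma pm_section_cases:
  obtains A l B where "u = pm_section Gm A l B"
proof (cases u)
  case (fields X xi l)
  let ?A = "(1/2) *\<^sub>R (X + matrix_inv Gm *v xi)" and ?B = "(1/2) *\<^sub>R (X - matrix_inv Gm *v xi)"
  have "u = pm_section Gm ?A l ?B"
    unfolding fields pm_section_def
    by (simp add: matrix_vector_mult_scaleR matrix_vector_right_distrib
        matrix_vector_mult_diff_distrib algebra_simps scaleR_2[symmetric])
  then show ?thesis by (rule that)
qed

lemma pm_section_add:
  "pm_section Gm A l B + pm_section Gm A' l' B' = pm_section Gm (A + A') (l + l') (B + B')"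
  unfolding pm_section_def
  by (simp add: matrix_vector_right_distrib matrix_vector_mult_diff_distrib algebra_simps)

lemma pm_section_scaleR: "c *\<^sub>R pm_section Gm A l B = pm_section Gm (c *\<^sub>R A) (c * l) (c *\<^sub>R B)"
  unfolding pm_section_def by (simp add: matrix_vector_mult_scaleR algebra_simps)

lemma pm_section_uminus: "- pm_section Gm A l B = pm_section Gm (- A) (- l) (- B)"
  unfolding pm_section_def by (simp add: algebra_simps)

lemma pm_section_0: "pm_section Gm 0 0 0 = 0"
  unfolding pm_section_def by (simp add: zero_prod_def)

lemma pm_section_eq_iff:
  "pm_section Gm A l B = pm_section Gm A' l' B' \<longleftrightarrow> A = A' \<and> l = l' \<and> B = B'"
proof
  assume "pm_section Gm A l B = pm_section Gm A' l' B'"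
  then have "A + B = A' + B'" "Gm *v (A - B) = Gm *v (A' - B')" "l = l'"
    unfolding pm_section_def by auto
  then have "A + B = A' + B'" "A - B = A' - B'" "l = l'"
    by (metis matrix_inv_Gm_cancel(1))+
  then have "(A + B) + (A - B) = (A' + B') + (A' - B')" "(A + B) - (A - B) = (A' + B') - (A' - B')" "l = l'"
    by simp_all
  then show "A = A' \<and> l = l' \<and> B = B'"
    by (simp add: algebra_simps flip: scaleR_2)
qed simp

lemma pm_section_eq_0_iff: "pm_section Gm A l B = 0 \<longleftrightarrow> A = 0 \<and> l = 0 \<and> B = 0"
  using pm_section_eq_iff[of A l B 0 0 0] by (simp add: pm_section_0)

lemma pairing_pm_section:
  "pairing (pm_section Gm A l B) (pm_section Gm A' l' B') = gm Gm A A' + l * l' - gm Gm B B'"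
  unfolding pm_section_def pairing_def
  by (simp add: inner_Gm_left inner_add_right inner_diff_right inner_add_left
      gm_commute[of A' A] gm_commute[of B' B] gm_commute[of B A'] gm_commute[of B' A] field_simps)

lemma std_gen_metric_pm_section: "std_gen_metric Gm (pm_section Gm A l B) = pm_section Gm A l (- B)"
  unfolding std_gen_metric_def pm_section_def by simp

lemma gen_metric_std_gen_metric: "gen_metric (std_gen_metric Gm)"
proof -
  have "linear (std_gen_metric Gm)"
  proof (rule linearI)
    fix u v :: sec
    obtain A l B A' l' B' where "u = pm_section Gm A l B" "v = pm_section Gm A' l' B'"
      by (meson pm_section_cases)
    then show "std_gen_metric Gm (u + v) = std_gen_metric Gm u + std_gen_metric Gm v"
      by (simp add: pm_section_add std_gen_metric_pm_section)
  next
    fix c and u :: sec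
    obtain A l B where "u = pm_section Gm A l B" by (rule pm_section_cases)
    then show "std_gen_metric Gm (c *\<^sub>R u) = c *\<^sub>R std_gen_metric Gm u"
      by (simp add: pm_section_scaleR std_gen_metric_pm_section)
  qed
  moreover have "std_gen_metric Gm (std_gen_metric Gm u) = u" for u
    by (cases u rule: pm_section_cases) (simp add: std_gen_metric_pm_section)
  moreover have "pairing (std_gen_metric Gm u) v = pairing u (std_gen_metric Gm v)" for u v
    by (cases u rule: pm_section_cases, cases v rule: pm_section_cases)
      (simp add: std_gen_metric_pm_section pairing_pm_section)
  ultimately show ?thesis unfolding gen_metric_def by blast
qed

lemma pairing_dorfman_pm_section:
  assumes "bilinear br" "alt3 H" "alt2 F"
  shows "pairing (dorfman br H F (pm_section Gm A1 l1 B1) (pm_section Gm A2 l2 B2))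
      (pm_section Gm A3 l3 B3) =
    (gm Gm (A3 - B3) (br (A1 + B1) (A2 + B2)) - gm Gm (A2 - B2) (br (A1 + B1) (A3 + B3))
     + gm Gm (A1 - B1) (br (A2 + B2) (A3 + B3)) + H (A1 + B1) (A2 + B2) (A3 + B3)) / 2
    + l2 * F (A1 + B1) (A3 + B3) - l1 * F (A2 + B2) (A3 + B3) - l3 * F (A1 + B1) (A2 + B2)"
  unfolding pm_section_def pairing_dorfman[OF assms] by (simp add: inner_Gm_left)

end

locale almost_contact_metric = nondeg_metric +
  fixes J :: "real^3^3" and X :: vec3
  assumes J_skew: "\<And>u v. gm Gm (J *v u) v = - gm Gm u (J *v v)"
    and gm_X_X: "gm Gm X X = 1"
    and J_X: "J *v X = 0"
    and J_J_perp: "\<And>u. gm Gm u X = 0 \<Longrightarrow> J *v (J *v u) = - u"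
begin

lemma gm_J_right: "gm Gm u (J *v v) = - gm Gm (J *v u) v"
  using J_skew[of u v] by simp

lemma gm_J_X: "gm Gm (J *v u) X = 0"
  using J_skew[of u X] J_X by simp

lemma gm_J_self: "gm Gm (J *v u) u = 0"
  using J_skew[of u u] gm_commute[of "J *v u" u] by simp

lemma J_J: "J *v (J *v u) = - u + gm Gm u X *\<^sub>R X"
proof -
  have "gm Gm (u - gm Gm u X *\<^sub>R X) X = 0" using gm_X_X by simp
  then have "J *v (J *v (u - gm Gm u X *\<^sub>R X)) = - (u - gm Gm u X *\<^sub>R X)" by (rule J_J_perp)
  then show ?thesis
    by (simp add: matrix_vector_mult_diff_distrib matrix_vector_mult_scaleR J_X)
qed

lemma gm_J_J: "gm Gm (J *v u) (J *v v) = gm Gm u v - gm Gm u X * gm Gm v X"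
  using J_skew[of u "J *v v"] J_J[of v] by (simp add: gm_commute[of X u] gm_commute[of v u])

end

locale orthonormal_frame = nondeg_metric +
  fixes v1 v2 v3 :: vec3 and e :: real
  assumes e: "e = 1 \<or> e = -1"
    and gm_v1_v1: "gm Gm v1 v1 = e" and gm_v2_v2: "gm Gm v2 v2 = 1" and gm_v3_v3: "gm Gm v3 v3 = e"
    and gm_v1_v2: "gm Gm v1 v2 = 0" and gm_v1_v3: "gm Gm v1 v3 = 0" and gm_v2_v3: "gm Gm v2 v3 = 0"
begin

lemma e_e: "e * e = 1" "e * (e * a) = a"
  using e by auto

lemma gm_v2_v1: "gm Gm v2 v1 = 0" and gm_v3_v1: "gm Gm v3 v1 = 0" and gm_v3_v2: "gm Gm v3 v2 = 0"
  using gm_v1_v2 gm_v1_v3 gm_v2_v3 gm_commute by metis+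

lemmas gm_frame = gm_v1_v1 gm_v2_v2 gm_v3_v3 gm_v1_v2 gm_v1_v3 gm_v2_v3 gm_v2_v1 gm_v3_v1 gm_v3_v2

definition "c1 x = e * gm Gm x v1"
definition "c2 x = gm Gm x v2"
definition "c3 x = e * gm Gm x v3"

lemma frame_independent: "a *\<^sub>R v1 + b *\<^sub>R v2 + c *\<^sub>R v3 = 0 \<Longrightarrow> a = 0 \<and> b = 0 \<and> c = 0"
proof -
  assume h: "a *\<^sub>R v1 + b *\<^sub>R v2 + c *\<^sub>R v3 = 0"
  have "gm Gm (a *\<^sub>R v1 + b *\<^sub>R v2 + c *\<^sub>R v3) v = 0" for v using h by simp
  from this[of v1] this[of v2] this[of v3] have "a * e = 0" "b = 0" "c * e = 0"
    by (simp_all add: gm_frame)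
  then show ?thesis using e by auto
qed

lemma frame_expansion: "x = c1 x *\<^sub>R v1 + c2 x *\<^sub>R v2 + c3 x *\<^sub>R v3"
proof -
  obtain a b c where x: "x = a *\<^sub>R v1 + b *\<^sub>R v2 + c *\<^sub>R v3"
    using independent_triple_spans[OF frame_independent] .
  have "c1 x = a" "c2 x = b" "c3 x = c"
    unfolding x c1_def c2_def c3_def by (simp_all add: gm_frame e_e mult.assoc[symmetric])
  then show ?thesis using x by simp
qed

lemma frame_combination_eqI:
  assumes "c1 x = a" "c2 x = b" "c3 x = c"
  shows "x = a *\<^sub>R v1 + b *\<^sub>R v2 + c *\<^sub>R v3"
  by (subst frame_expansion[of x]) (simp only: assms)

lemma coords_linear [simp]:
  "c1 (x + y) = c1 x + c1 y" "c2 (x + y) = c2 x + c2 y" "c3 (x + y) = c3 x + c3 y"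
  "c1 (r *\<^sub>R x) = r * c1 x" "c2 (r *\<^sub>R x) = r * c2 x" "c3 (r *\<^sub>R x) = r * c3 x"
  "c1 (- x) = - c1 x" "c2 (- x) = - c2 x" "c3 (- x) = - c3 x"
  "c1 (x - y) = c1 x - c1 y" "c2 (x - y) = c2 x - c2 y" "c3 (x - y) = c3 x - c3 y"
  "c1 0 = 0" "c2 0 = 0" "c3 0 = 0"
  unfolding c1_def c2_def c3_def by (simp_all add: algebra_simps)

lemma coords_frame [simp]:
  "c1 v1 = 1" "c2 v1 = 0" "c3 v1 = 0"
  "c1 v2 = 0" "c2 v2 = 1" "c3 v2 = 0"
  "c1 v3 = 0" "c2 v3 = 0" "c3 v3 = 1"
  unfolding c1_def c2_def c3_def by (simp_all add: gm_frame e_e)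

lemma gm_frame_right: "gm Gm z v1 = e * c1 z" "gm Gm z v2 = c2 z" "gm Gm z v3 = e * c3 z"
  unfolding c1_def c2_def c3_def by (simp_all add: e_e)

lemma gm_coords: "gm Gm x y = e * c1 x * c1 y + c2 x * c2 y + e * c3 x * c3 y"
proof -
  have "gm Gm x y = gm Gm x (c1 y *\<^sub>R v1 + c2 y *\<^sub>R v2 + c3 y *\<^sub>R v3)"
    using frame_expansion[of y] by simp
  then show ?thesis by (simp add: gm_frame_right algebra_simps)
qed

lemma trace_frame:
  assumes L: "linear L"
  shows "trace (matrix L) = e * gm Gm v1 (L v1) + gm Gm v2 (L v2) + e * gm Gm v3 (L v3)"
proof -
  have "L (axis i 1) $ i = c1 (axis i 1) * (L v1 $ i) + c2 (axis i 1) * (L v2 $ i)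
      + c3 (axis i 1) * (L v3 $ i)" for i
    using arg_cong[OF frame_expansion[of "axis i 1"], of L]
    by (simp add: linear_add[OF L] linear_scale[OF L])
  moreover have "c1 (axis i 1) = e * (Gm *v v1) $ i" "c2 (axis i 1) = (Gm *v v2) $ i"
    "c3 (axis i 1) = e * (Gm *v v3) $ i" for i
    unfolding c1_def c2_def c3_def gm_def by (simp_all add: inner_axis')
  ultimately have "trace (matrix L) = e * ((Gm *v v1) \<bullet> L v1) + (Gm *v v2) \<bullet> L v2
      + e * ((Gm *v v3) \<bullet> L v3)"
    unfolding trace_def matrix_def by (simp add: inner_vec_def sum_3 algebra_simps)
  then show ?thesis by (simp add: inner_Gm_left)
qed

lemma alternating_bilinear_frame_expansion:
  fixes b :: "vec3 \<Rightarrow> vec3 \<Rightarrow> 'a::real_vector"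
  assumes b: "bilinear b" and alt: "\<And>x. b x x = 0"
  shows "b x y = (c1 x * c2 y - c2 x * c1 y) *\<^sub>R b v1 v2 + (c2 x * c3 y - c3 x * c2 y) *\<^sub>R b v2 v3
    + (c3 x * c1 y - c1 x * c3 y) *\<^sub>R b v3 v1"
proof -
  have skew: "b v2 v1 = - b v1 v2" "b v3 v2 = - b v2 v3" "b v1 v3 = - b v3 v1"
    using bilinear_alternating_skew[OF b] alt by blast+
  have "b x y = b (c1 x *\<^sub>R v1 + c2 x *\<^sub>R v2 + c3 x *\<^sub>R v3) (c1 y *\<^sub>R v1 + c2 y *\<^sub>R v2 + c3 y *\<^sub>R v3)"
    by (simp only: frame_expansion[symmetric])
  then show ?thesis
    by (simp add: bilinear_ladd[OF b] bilinear_radd[OF b] bilinear_lmul[OF b]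
        bilinear_rmul[OF b] alt skew algebra_simps)
qed

lemma alt3_frame_expansion:
  assumes H: "alt3 H"
  shows "H x y z = H v1 v2 v3 * (c1 x * (c2 y * c3 z - c3 y * c2 z)
    - c2 x * (c1 y * c3 z - c3 y * c1 z) + c3 x * (c1 y * c2 z - c2 y * c1 z))"
proof -
  have perm: "H v2 v3 v1 = H v1 v2 v3" "H v3 v1 v2 = H v1 v2 v3"
    "H v2 v1 v3 = - H v1 v2 v3" "H v1 v3 v2 = - H v1 v2 v3" "H v3 v2 v1 = - H v1 v2 v3"
    using alt3_cyclic[OF H, of v1 v2 v3] alt3_cyclic[OF H, of v3 v1 v2]
      alt3_swap12[OF H, of v1 v2 v3] alt3_swap23[OF H, of v1 v2 v3]
      alt3_swap12[OF H, of v1 v3 v2] alt3_swap23[OF H, of v3 v1 v2]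
    by simp_all
  have "H x y z = H (c1 x *\<^sub>R v1 + c2 x *\<^sub>R v2 + c3 x *\<^sub>R v3) (c1 y *\<^sub>R v1 + c2 y *\<^sub>R v2 + c3 y *\<^sub>R v3)
      (c1 z *\<^sub>R v1 + c2 z *\<^sub>R v2 + c3 z *\<^sub>R v3)"
    by (simp only: frame_expansion[symmetric])
  also have "\<dots> = H v1 v2 v3 * (c1 x * (c2 y * c3 z - c3 y * c2 z)
      - c2 x * (c1 y * c3 z - c3 y * c1 z) + c3 x * (c1 y * c2 z - c2 y * c1 z))"
    apply (simp only: alt3_add1[OF H] alt3_add2[OF H] alt3_add3[OF H] alt3_scaleR1[OF H]
        alt3_scaleR2[OF H] alt3_scaleR3[OF H] alt3_repeated[OF H] perm)
    apply (simp add: algebra_simps)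
    done
  finally show ?thesis .
qed

lemma bracket_frame_coords:
  assumes b: "bilinear br" "\<And>x. br x x = 0"
    and br: "br v1 v2 = (e * t) *\<^sub>R v3" "br v2 v3 = (e * t) *\<^sub>R v1" "br v3 v1 = h *\<^sub>R v2"
  shows "gm Gm z (br x y) = t * (c1 z * (c2 x * c3 y - c3 x * c2 y) + c3 z * (c1 x * c2 y - c2 x * c1 y))
    + h * c2 z * (c3 x * c1 y - c1 x * c3 y)"
  unfolding alternating_bilinear_frame_expansion[OF b, of x y] br
  by (simp add: gm_frame_right algebra_simps e_e)

lemma almost_contact_frame_coords:
  assumes "almost_contact_metric Gm J X" and X: "X = v2 \<or> X = - v2"
  obtains q where "q * q = 1"
    "\<And>x. c1 (J *v x) = - q * c3 x" "\<And>x. c2 (J *v x) = 0" "\<And>x. c3 (J *v x) = q * c1 x"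
proof -
  interpret J: almost_contact_metric Gm J X by fact
  have v1_X: "gm Gm v1 X = 0" and v2_J: "J *v v2 = 0"
    using X J.J_X gm_frame by auto
  define q where "q = c3 (J *v v1)"
  have Jv1: "J *v v1 = q *\<^sub>R v3"
  proof -
    have "c1 (J *v v1) = 0" unfolding c1_def using J.gm_J_self[of v1] by simp
    moreover have "c2 (J *v v1) = 0" unfolding c2_def using J.gm_J_X[of v1] X by auto
    ultimately show ?thesis using frame_combination_eqI[of "J *v v1" 0 0 q] unfolding q_def by simp
  qed
  have "q * q * e = e"
    using J.gm_J_J[of v1 v1] v1_X unfolding Jv1 by (simp add: gm_frame)
  then have qq: "q * q = 1" using e by auto
  have "q *\<^sub>R (J *v v3) = - v1"
    using J.J_J[of v1] v1_X unfolding Jv1 by (simp add: matrix_vector_mult_scaleR)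
  then have "q *\<^sub>R (q *\<^sub>R (J *v v3)) = - (q *\<^sub>R v1)" by simp
  then have Jv3: "J *v v3 = - q *\<^sub>R v1" using qq by simp
  have "J *v x = (c1 x * q) *\<^sub>R v3 - (c3 x * q) *\<^sub>R v1" for x
    using arg_cong[OF frame_expansion[of x], of "\<lambda>y. J *v y"]
    by (simp add: matrix_vector_right_distrib matrix_vector_mult_scaleR Jv1 Jv3 v2_J)
  then show ?thesis using qq by (intro that[of q]) simp_all
qed

end

section \<open>The structure determined by the components\<close>

locale components =
  fixes Gm Jp Jm :: "real^3^3" and Xp Xm :: vec3
  assumes components: "components_ok Gm Jp Jm Xp Xm"
begin

sublocale nondeg_metric Gm
  using components unfolding components_ok_def by unfold_locales blast

sublocale p: almost_contact_metric Gm Jp Xp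
  using components unfolding components_ok_def by unfold_locales blast+

sublocale m: almost_contact_metric Gm Jm Xm
  using components unfolding components_ok_def by unfold_locales blast+

abbreviation "P \<equiv> struct_of_components Gm Jp Jm Xp Xm"

lemma P_pm_section: "P (pm_section Gm A l B) = pm_section Gm (Jp *v A + l *\<^sub>R Xp) (- gm Gm Xp A) (Jm *v B)"
  unfolding struct_of_components_def pm_section_def Let_def
  by (simp add: matrix_vector_mult_scaleR matrix_vector_right_distrib matrix_vector_mult_diff_distrib
      algebra_simps flip: scaleR_2)

lemma P_P_pm_section: "P (P (pm_section Gm A l B)) = pm_section Gm (- A) (- l) (- B + gm Gm B Xm *\<^sub>R Xm)"
  unfolding P_pm_section
  by (simp add: matrix_vector_right_distrib matrix_vector_mult_scaleR p.J_J p.J_X m.J_J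
      p.gm_J_right p.gm_X_X gm_commute[of A Xp])

lemma linear_P: "linear P"
proof (rule linearI)
  fix u v :: sec
  obtain A l B A' l' B' where "u = pm_section Gm A l B" "v = pm_section Gm A' l' B'"
    by (meson pm_section_cases)
  then show "P (u + v) = P u + P v"
    by (simp add: pm_section_add P_pm_section matrix_vector_right_distrib algebra_simps)
next
  fix c and u :: sec
  obtain A l B where "u = pm_section Gm A l B" by (rule pm_section_cases)
  then show "P (c *\<^sub>R u) = c *\<^sub>R P u"
    by (simp add: pm_section_scaleR P_pm_section matrix_vector_mult_scaleR algebra_simps)
qed

lemma pairing_P_left: "pairing (P u) v = - pairing u (P v)"
  by (cases u rule: pm_section_cases, cases v rule: pm_section_cases)
    (simp add: P_pm_section pairing_pm_section p.gm_J_right m.gm_J_right gm_commute[of Xp]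
      algebra_simps)

lemma P_cube: "P (P (P u)) = - P u"
proof (cases u rule: pm_section_cases)
  case (1 A l B)
  then have "P (P (P u)) = P (pm_section Gm (- A) (- l) (- B + gm Gm B Xm *\<^sub>R Xm))"
    by (simp only: P_P_pm_section)
  also have "\<dots> = - P u"
    by (simp add: 1 P_pm_section pm_section_uminus matrix_vector_right_distrib
        matrix_vector_mult_scaleR matrix_vector_mult_diff_distrib m.J_X)
  finally show ?thesis .
qed

lemma kernel_P: "{u. P u = 0} = span {pm_section Gm 0 0 Xm}"
proof -
  have "P u = 0 \<longleftrightarrow> (\<exists>c. u = c *\<^sub>R pm_section Gm 0 0 Xm)" for u
  proof
    assume h: "P u = 0"
    obtain A l B where u: "u = pm_section Gm A l B" by (rule pm_section_cases)
    from h have A: "Jp *v A + l *\<^sub>R Xp = 0" and "gm Gm Xp A = 0" and B: "Jm *v B = 0"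
      unfolding u P_pm_section pm_section_eq_0_iff by auto
    moreover have "l = 0"
      using arg_cong[OF A, of "\<lambda>v. gm Gm v Xp"] by (simp add: p.gm_J_X p.gm_X_X)
    ultimately have "A = 0"
      using p.J_J[of A] gm_commute[of A Xp] by simp
    moreover have "B = gm Gm B Xm *\<^sub>R Xm" using m.J_J[of B] B by simp
    ultimately have "u = gm Gm B Xm *\<^sub>R pm_section Gm 0 0 Xm"
      unfolding u pm_section_scaleR using \<open>l = 0\<close> by simp
    then show "\<exists>c. u = c *\<^sub>R pm_section Gm 0 0 Xm" ..
  qed (auto simp: pm_section_scaleR P_pm_section m.J_X pm_section_0 matrix_vector_mult_scaleR)
  then show ?thesis unfolding span_singleton by auto
qed

lemma Bn_gacs_P: "Bn_gacs P"
proof -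
  have K: "pm_section Gm 0 0 Xm \<noteq> 0"
    using m.gm_X_X by (auto simp: pm_section_eq_0_iff)
  have "pairing u u \<noteq> 0" if "P u = 0" "u \<noteq> 0" for u
  proof -
    have "u \<in> range (\<lambda>c. c *\<^sub>R pm_section Gm 0 0 Xm)"
      using that(1) kernel_P span_singleton by blast
    then obtain c where u: "u = c *\<^sub>R pm_section Gm 0 0 Xm" by blast
    with that have "c \<noteq> 0" by auto
    then show ?thesis unfolding u pm_section_scaleR pairing_pm_section by (simp add: m.gm_X_X)
  qed
  moreover have "dim {u. P u = 0} = 1" unfolding kernel_P using K by simp
  ultimately show ?thesis
    unfolding Bn_gacs_def using linear_P pairing_P_left P_cube by blast
qed

lemma std_gen_metric_commute_P: "std_gen_metric Gm \<circ> P = P \<circ> std_gen_metric Gm"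
proof
  fix u
  show "(std_gen_metric Gm \<circ> P) u = (P \<circ> std_gen_metric Gm) u"
    by (cases u rule: pm_section_cases) (simp add: P_pm_section std_gen_metric_pm_section)
qed

lemma std_gen_metric_comp_P: "std_gen_metric Gm \<circ> P = struct_of_components Gm Jp (- Jm) Xp Xm"
  by (rule ext) (simp add: struct_of_components_def std_gen_metric_def Let_def split: prod.splits)

lemma range_P_iff: "u \<in> range P \<longleftrightarrow> pairing u (pm_section Gm 0 0 Xm) = 0"
proof
  assume "u \<in> range P"
  then obtain q where "u = P q" by blast
  then show "pairing u (pm_section Gm 0 0 Xm) = 0"
    by (simp add: pairing_P_left P_pm_section m.J_X pm_section_0 pairing_zero_right)
next
  assume K: "pairing u (pm_section Gm 0 0 Xm) = 0"
  obtain A l B where u: "u = pm_section Gm A l B" by (rule pm_section_cases)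
  have "gm Gm B Xm = 0" using K unfolding u pairing_pm_section by simp
  then have "P (P u) = - u" unfolding u P_P_pm_section pm_section_uminus by simp
  then have "u = P (- P u)" using linear_neg[OF linear_P] by simp
  then show "u \<in> range P" by blast
qed

lemma Bn_integrable_pairing_kernel:
  assumes "Bn_integrable br H F P" "x \<in> range P" "y \<in> range P"
  shows "pairing (dorfman br H F x y - dorfman br H F (P x) (P y)) (pm_section Gm 0 0 Xm) = 0"
  using assms unfolding Bn_integrable_def Let_def range_P_iff by blast

lemma Bn_integrable_pairing:
  assumes "Bn_integrable br H F P" "x \<in> range P" "y \<in> range P"
  shows "pairing (dorfman br H F (P x) y + dorfman br H F x (P y)) z =
    - pairing (dorfman br H F x y - dorfman br H F (P x) (P y)) (P z)"
  using assms unfolding Bn_integrable_def Let_def by (metis pairing_P_left)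

lemma Bn_integrableI:
  assumes kernel: "\<And>u v. pairing (dorfman br H F (P u) (P v)
        - dorfman br H F (P (P u)) (P (P v))) (pm_section Gm 0 0 Xm) = 0"
    and eigen: "\<And>u v z. pairing (dorfman br H F (P (P u)) (P v) + dorfman br H F (P u) (P (P v))) z
        + pairing (dorfman br H F (P u) (P v) - dorfman br H F (P (P u)) (P (P v))) (P z) = 0"
  shows "Bn_integrable br H F P"
  unfolding Bn_integrable_def Let_def
proof (intro allI impI conjI)
  fix x y assume "x \<in> range P \<and> y \<in> range P"
  then obtain u v where x: "x = P u" and y: "y = P v" by blast
  let ?w = "dorfman br H F x y - dorfman br H F (P x) (P y)"
  show "?w \<in> range P" unfolding range_P_iff x y by (rule kernel)
  show "P ?w = dorfman br H F (P x) y + dorfman br H F x (P y)"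
  proof (rule pairing_eqI)
    fix z
    show "pairing (P ?w) z = pairing (dorfman br H F (P x) y + dorfman br H F x (P y)) z"
      using eigen[of u v z] unfolding x y pairing_P_left by simp
  qed
qed

lemma Bn_integrable_abelian:
  assumes "\<And>x y. br x y = 0"
  shows "Bn_integrable br (\<lambda>x y z. 0) (\<lambda>x y. 0) P"
proof -
  have "br = (\<lambda>x y. 0)" using assms by (intro ext)
  moreover have "(\<chi> k::3. (0::real)) = 0" by (simp add: zero_vec_def)
  ultimately have "dorfman br (\<lambda>x y z. 0) (\<lambda>x y. 0) u v = 0" for u v
    by (cases u, cases v) (simp add: dorfman_def zero_prod_def)
  then show ?thesis
    unfolding Bn_integrable_def Let_def using linear_0[OF linear_P] by auto
qed

lemma exists_perp_Xm: "\<exists>u. u \<noteq> 0 \<and> gm Gm u Xm = 0"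
proof -
  define n where "n = Gm *v Xm"
  have gu: "gm Gm u Xm = u \<bullet> n" for u unfolding n_def gm_def ..
  show ?thesis
  proof (cases "n$1 = 0")
    case True
    then show ?thesis
      by (intro exI[of _ "axis 1 1"]) (simp add: gu axis_eq_0_iff inner_axis')
  next
    case False
    then show ?thesis
      by (intro exI[of _ "vector [- (n$2), n$1, 0]"])
        (simp add: gu inner_vec_def sum_3 vec_eq_iff forall_3)
  qed
qed

text \<open>A null \<open>u \<perp> X\<^sub>-\<close> would be \<open>g\<close>-orthogonal to the basis \<open>u, J\<^sub>- u, X\<^sub>-\<close>.\<close>
lemma perp_Xm_non_null:
  assumes u: "u \<noteq> 0" "gm Gm u Xm = 0"
  shows "gm Gm u u \<noteq> 0"
proof
  assume null: "gm Gm u u = 0"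
  have JJu: "Jm *v (Jm *v u) = - u" using m.J_J_perp[OF u(2)] .
  have "a = 0 \<and> b = 0 \<and> c = 0" if h: "a *\<^sub>R u + b *\<^sub>R (Jm *v u) + c *\<^sub>R Xm = 0" for a b c
  proof -
    have "gm Gm (a *\<^sub>R u + b *\<^sub>R (Jm *v u) + c *\<^sub>R Xm) Xm = 0" using h by simp
    then have c: "c = 0" using u(2) by (simp add: m.gm_J_X m.gm_X_X)
    with h have h1: "a *\<^sub>R u + b *\<^sub>R (Jm *v u) = 0" by simp
    then have "Jm *v (a *\<^sub>R u + b *\<^sub>R (Jm *v u)) = 0" by simp
    then have h2: "a *\<^sub>R (Jm *v u) - b *\<^sub>R u = 0"
      by (simp add: matrix_vector_right_distrib matrix_vector_mult_scaleR JJu)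
    have "(a * a + b * b) *\<^sub>R u = a *\<^sub>R (a *\<^sub>R u + b *\<^sub>R (Jm *v u)) - b *\<^sub>R (a *\<^sub>R (Jm *v u) - b *\<^sub>R u)"
      by (simp add: algebra_simps)
    then have "a * a + b * b = 0" using h1 h2 u(1) by simp
    with c show ?thesis by (simp add: add_nonneg_eq_0_iff)
  qed
  moreover have "gm Gm u (Jm *v u) = 0" using m.gm_J_self[of u] gm_commute[of u "Jm *v u"] by simp
  ultimately have "u = 0" using gm_eq_0_if_orthogonal_to_triple null u(2) by blast
  with u(1) show False ..
qed

lemma exists_unit_perp_Xm: obtains v1 e where "gm Gm v1 Xm = 0" "gm Gm v1 v1 = e" "e = 1 \<or> e = -1"
proof -
  obtain u where u: "u \<noteq> 0" "gm Gm u Xm = 0" using exists_perp_Xm by blast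
  define q where "q = gm Gm u u"
  have "q \<noteq> 0" using perp_Xm_non_null[OF u] unfolding q_def .
  define v where "v = (1 / sqrt \<bar>q\<bar>) *\<^sub>R u"
  have "gm Gm v v = q / \<bar>q\<bar>"
    unfolding v_def q_def by (simp add: real_sqrt_mult_self flip: mult.assoc)
  moreover have "q / \<bar>q\<bar> = 1 \<or> q / \<bar>q\<bar> = -1" using \<open>q \<noteq> 0\<close> by (cases "q > 0") auto
  moreover have "gm Gm v Xm = 0" unfolding v_def using u(2) by simp
  ultimately show ?thesis using that by blast
qed

lemma orthonormal_frame_Jm:
  assumes "gm Gm v1 Xm = 0" "gm Gm v1 v1 = e" "e = 1 \<or> e = -1"
  shows "orthonormal_frame Gm v1 Xm (Jm *v v1) e"
  using assms
  by unfold_locales (auto simp: m.gm_X_X m.gm_J_J m.gm_J_self m.gm_J_X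
      gm_commute[of v1 "Jm *v v1"] gm_commute[of Xm "Jm *v v1"])

end

lemma components_ok_uminus_Jm: "components_ok Gm Jp Jm Xp Xm \<Longrightarrow> components_ok Gm Jp (- Jm) Xp Xm"
  unfolding components_ok_def by auto

section \<open>Necessity\<close>

locale integrable_components = components +
  fixes br :: "vec3 \<Rightarrow> vec3 \<Rightarrow> vec3"
    and H :: "vec3 \<Rightarrow> vec3 \<Rightarrow> vec3 \<Rightarrow> real" and F :: "vec3 \<Rightarrow> vec3 \<Rightarrow> real"
  assumes lie: "lie_algebra3 br" and H: "alt3 H" and F: "alt2 F"
    and integrable_P: "Bn_integrable br H F P"
    and integrable_GP: "Bn_integrable br H F (std_gen_metric Gm \<circ> P)"
begin

lemma bilinear_br: "bilinear br" and br_self: "br x x = 0"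
  using lie unfolding lie_algebra3_def by auto

lemma bilinear_F: "bilinear F" and F_self: "F x x = 0"
  using F unfolding alt2_def by auto

text \<open>\<open>std_gen_metric Gm \<circ> P\<close> is \<open>P\<close> with \<open>J\<^sub>-\<close> replaced by \<open>-J\<^sub>-\<close>, so adding
  the integrability conditions of the two structures cancels every term involving \<open>J\<^sub>-\<close>.\<close>
lemma bracket_identity_perp_Xm:
  assumes B: "gm Gm B Xm = 0"
  shows "- gm Gm Xm (br B A) - gm Gm A (br B Xm) - gm Gm B (br A Xm) + H B A Xm
    + 2 * l * F B Xm = 0"
proof -
  interpret c': components Gm Jp "- Jm" Xp Xm
    using components_ok_uminus_Jm[OF components] by unfold_locales
  have in_range: "pm_section Gm 0 0 B \<in> range P" "pm_section Gm A l 0 \<in> range P"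
    "pm_section Gm 0 0 B \<in> range c'.P" "pm_section Gm A l 0 \<in> range c'.P"
    using B by (simp_all add: range_P_iff c'.range_P_iff pairing_pm_section)
  let ?d = "dorfman br H F" and ?K = "pm_section Gm 0 0 Xm"
  let ?x = "pm_section Gm 0 0 B" and ?y = "pm_section Gm A l 0"
  have "pairing (?d ?x ?y - ?d (P ?x) (P ?y)) ?K = 0"
    using Bn_integrable_pairing_kernel[OF integrable_P in_range(1,2)] .
  moreover have "pairing (?d ?x ?y - ?d (c'.P ?x) (c'.P ?y)) ?K = 0"
    using c'.Bn_integrable_pairing_kernel[OF _ in_range(3,4)] integrable_GP
    unfolding std_gen_metric_comp_P by blast
  moreover have "pairing (?d (P ?x) (P ?y)) ?K + pairing (?d (c'.P ?x) (c'.P ?y)) ?K = 0"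
    unfolding P_pm_section c'.P_pm_section pairing_dorfman_pm_section[OF bilinear_br H F]
    by (simp add: bilinear_lneg[OF bilinear_br] bilinear_lneg[OF bilinear_F]
        alt3_scaleR1[OF H, of "-1", simplified] field_simps)
  ultimately have "pairing (?d ?x ?y) ?K = 0"
    unfolding pairing_diff_left by linarith
  then show ?thesis
    unfolding pairing_dorfman_pm_section[OF bilinear_br H F] by (simp add: field_simps)
qed

lemma P_derivation_plus_perp_minus:
  "pairing (dorfman br H F (P (pm_section Gm A1 l1 0)) (pm_section Gm A2 l2 0)
     + dorfman br H F (pm_section Gm A1 l1 0) (P (pm_section Gm A2 l2 0))) (pm_section Gm 0 0 C) = 0"
proof -
  interpret c': components Gm Jp "- Jm" Xp Xm
    using components_ok_uminus_Jm[OF components] by unfold_locales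
  have P_eq: "c'.P (pm_section Gm A l 0) = P (pm_section Gm A l 0)" for A l
    by (simp add: P_pm_section c'.P_pm_section)
  have in_range: "pm_section Gm A l 0 \<in> range P" "pm_section Gm A l 0 \<in> range c'.P" for A l
    by (simp_all add: range_P_iff c'.range_P_iff pairing_pm_section)
  note e = Bn_integrable_pairing[OF integrable_P in_range(1) in_range(1),
      of A1 l1 A2 l2 "pm_section Gm 0 0 C"]
  note e' = c'.Bn_integrable_pairing[OF _ in_range(2) in_range(2),
      of br H F A1 l1 A2 l2 "pm_section Gm 0 0 C"]
  from e e' integrable_GP show ?thesis
    unfolding P_eq std_gen_metric_comp_P P_pm_section c'.P_pm_section
    by (simp add: pm_section_uminus[of 0 0, simplified, symmetric] pairing_uminus_right)
qed

end

locale integrable_frame = integrable_components +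
  fixes v1 :: vec3 and e :: real
  assumes unimodular: "unimodular3 br"
    and gm_v1_Xm: "gm Gm v1 Xm = 0" and gm_v1_v1: "gm Gm v1 v1 = e" and e_cases: "e = 1 \<or> e = -1"
begin

abbreviation "v3 \<equiv> Jm *v v1"

sublocale orthonormal_frame Gm v1 Xm v3 e
  using orthonormal_frame_Jm[OF gm_v1_Xm gm_v1_v1 e_cases] .

definition "lam = gm Gm v3 (br v1 Xm)"
definition "h = H v1 Xm v3"
definition "f = F v1 v3"

lemma br_skew: "br y x = - br x y"
  using bilinear_alternating_skew[OF bilinear_br] br_self by blast

lemma gm_frame_brackets:
  "gm Gm v1 (br v1 Xm) = 0" "gm Gm Xm (br v1 Xm) = 0"
  "gm Gm Xm (br Xm v3) = 0" "gm Gm v3 (br Xm v3) = 0"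
  "gm Gm Xm (br v3 v1) = h" "gm Gm v1 (br Xm v3) = lam"
  "F v1 Xm = 0" "F v3 Xm = 0"
proof -
  note eq = bracket_identity_perp_Xm
  have H_perm: "H v1 v3 Xm = - h" "H v3 v1 Xm = h"
    unfolding h_def by (rule alt3_swap23[OF H], rule alt3_cyclic[OF H])
  have skew: "br Xm v1 = - br v1 Xm" "br v3 Xm = - br Xm v3" "br v1 v3 = - br v3 v1"
    by (rule br_skew)+
  note simps = gm_frame br_self alt3_repeated[OF H] F_self skew H_perm
  show r12: "gm Gm v1 (br v1 Xm) = 0" "gm Gm Xm (br v1 Xm) = 0"
    using eq[OF gm_v1_Xm, of v1 0] eq[OF gm_v1_Xm, of Xm 0] by (simp_all add: simps)
  show r23: "gm Gm Xm (br Xm v3) = 0" "gm Gm v3 (br Xm v3) = 0"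
    using eq[OF gm_v3_v2, of Xm 0] eq[OF gm_v3_v2, of v3 0] by (simp_all add: simps)
  show "F v1 Xm = 0" "F v3 Xm = 0"
    using eq[OF gm_v1_Xm, of Xm 1] eq[OF gm_v3_v2, of Xm 1] r12 r23 by (simp_all add: simps)
  have "gm Gm Xm (br v3 v1) - gm Gm v3 (br v1 Xm) + gm Gm v1 (br Xm v3) - h = 0"
    "- gm Gm Xm (br v3 v1) + gm Gm v1 (br Xm v3) - gm Gm v3 (br v1 Xm) + h = 0"
    using eq[OF gm_v1_Xm, of v3 0] eq[OF gm_v3_v2, of v1 0] by (simp_all add: simps)
  then show "gm Gm Xm (br v3 v1) = h" "gm Gm v1 (br Xm v3) = lam"
    unfolding lam_def by linarith+
qed

lemma gm_frame_bracket_v3_v1: "gm Gm v3 (br v3 v1) = 0" "gm Gm v1 (br v3 v1) = 0"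
proof -
  have trace: "trace (matrix (br x)) = e * gm Gm v1 (br x v1) + gm Gm Xm (br x Xm)
      + e * gm Gm v3 (br x v3)" for x
    by (rule trace_frame) (use bilinear_br in \<open>simp add: bilinear_def\<close>)
  have "trace (matrix (br v1)) = 0" "trace (matrix (br v3)) = 0"
    using unimodular unfolding unimodular3_def by blast+
  then show "gm Gm v3 (br v3 v1) = 0" "gm Gm v1 (br v3 v1) = 0"
    unfolding trace using gm_frame_brackets e_cases
    using br_skew[of v1 v3] br_skew[of v3 Xm] by (auto simp: br_self)
qed

lemma frame_brackets:
  "br v1 Xm = (e * lam) *\<^sub>R v3" "br Xm v3 = (e * lam) *\<^sub>R v1" "br v3 v1 = h *\<^sub>R Xm"
proof -
  have "c1 (br v1 Xm) = 0" "c2 (br v1 Xm) = 0" "c3 (br v1 Xm) = e * lam"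
    "c1 (br Xm v3) = e * lam" "c2 (br Xm v3) = 0" "c3 (br Xm v3) = 0"
    "c1 (br v3 v1) = 0" "c2 (br v3 v1) = h" "c3 (br v3 v1) = 0"
    using gm_frame_brackets gm_frame_bracket_v3_v1 unfolding c1_def c2_def c3_def lam_def
    by (simp_all add: gm_commute[of "br _ _"])
  from frame_combination_eqI[OF this(1-3)] frame_combination_eqI[OF this(4-6)]
    frame_combination_eqI[OF this(7-9)]
  show "br v1 Xm = (e * lam) *\<^sub>R v3" "br Xm v3 = (e * lam) *\<^sub>R v1" "br v3 v1 = h *\<^sub>R Xm"
    by simp_all
qed

lemmas gm_bracket_coords = bracket_frame_coords[OF bilinear_br br_self frame_brackets]

lemma H_coords: "H x y z = h * (c1 x * (c2 y * c3 z - c3 y * c2 z)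
    - c2 x * (c1 y * c3 z - c3 y * c1 z) + c3 x * (c1 y * c2 z - c2 y * c1 z))"
  unfolding h_def by (rule alt3_frame_expansion[OF H])

lemma F_coords: "F x y = f * (c1 x * c3 y - c3 x * c1 y)"
proof -
  have "F Xm v3 = 0" "F v3 v1 = - f"
    using gm_frame_brackets(8) alt2_skew[OF F, of v3] unfolding f_def by auto
  then show ?thesis
    unfolding alternating_bilinear_frame_expansion[OF bilinear_F F_self, of x y]
    by (simp add: gm_frame_brackets(7) algebra_simps)
qed

lemma pairing_dorfman_plus_coords:
  "pairing (dorfman br H F (pm_section Gm A1 l1 0) (pm_section Gm A2 l2 0)) (pm_section Gm 0 0 C) =
  (- (lam * (c1 C * (c2 A1 * c3 A2 - c3 A1 * c2 A2) + c3 C * (c1 A1 * c2 A2 - c2 A1 * c1 A2))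
      + h * c2 C * (c3 A1 * c1 A2 - c1 A1 * c3 A2))
   - (lam * (c1 A2 * (c2 A1 * c3 C - c3 A1 * c2 C) + c3 A2 * (c1 A1 * c2 C - c2 A1 * c1 C))
      + h * c2 A2 * (c3 A1 * c1 C - c1 A1 * c3 C))
   + (lam * (c1 A1 * (c2 A2 * c3 C - c3 A2 * c2 C) + c3 A1 * (c1 A2 * c2 C - c2 A2 * c1 C))
      + h * c2 A1 * (c3 A2 * c1 C - c1 A2 * c3 C))
   + h * (c1 A1 * (c2 A2 * c3 C - c3 A2 * c2 C) - c2 A1 * (c1 A2 * c3 C - c3 A2 * c1 C)
      + c3 A1 * (c1 A2 * c2 C - c2 A2 * c1 C))) / 2
  + l2 * (f * (c1 A1 * c3 C - c3 A1 * c1 C)) - l1 * (f * (c1 A2 * c3 C - c3 A2 * c1 C))"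
  unfolding pairing_dorfman_pm_section[OF bilinear_br H F]
  by (simp only: add_0_left add_0_right diff_0 diff_0_right gm_minus_left mult_zero_left gm_bracket_coords
      H_coords F_coords)

lemma P_derivation_plus_equations:
  assumes "gm Gm Xp a = 0"
  shows "pairing (dorfman br H F (pm_section Gm (Jp *v a) 0 0) (pm_section Gm Xp 0 0)) (pm_section Gm 0 0 C)
    + pairing (dorfman br H F (pm_section Gm a 0 0) (pm_section Gm 0 (-1) 0)) (pm_section Gm 0 0 C) = 0"
    and "pairing (dorfman br H F (pm_section Gm (Jp *v a) 0 0) (pm_section Gm 0 1 0)) (pm_section Gm 0 0 C)
    + pairing (dorfman br H F (pm_section Gm a 0 0) (pm_section Gm Xp 0 0)) (pm_section Gm 0 0 C) = 0"
  using P_derivation_plus_perp_minus[of a 0 Xp 0 C] P_derivation_plus_perp_minus[of a 0 0 1 C] assms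
  by (simp_all add: P_pm_section p.J_X p.gm_X_X pairing_add_left)

end

definition iso_frame :: "(vec3 \<Rightarrow> vec3 \<Rightarrow> vec3) \<Rightarrow> real^3^3 \<Rightarrow> vec3 \<Rightarrow> vec3 \<Rightarrow> bool" where
  "iso_frame br Gm Xp Xm \<longleftrightarrow> (\<exists>v1 v2 v3 (lam::real).
     gm Gm v1 v2 = 0 \<and> gm Gm v1 v3 = 0 \<and> gm Gm v2 v3 = 0 \<and>
     gm Gm v1 v1 \<in> {1, -1} \<and> gm Gm v3 v3 \<in> {1, -1} \<and> gm Gm v2 v2 = 1 \<and>
     lam \<noteq> 0 \<and>
     br v1 v2 = (gm Gm v3 v3 * lam) *\<^sub>R v3 \<and>
     br v3 v1 = 0 \<and>
     br v2 v3 = (gm Gm v1 v1 * lam) *\<^sub>R v1 \<and>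
     Xm = v2 \<and> (Xp = Xm \<or> Xp = - Xm))"

lemma oblique_structure_equations:
  fixes e t h f p1 p2 p3 b1 b2 b3 :: real
  assumes e: "e = 1 \<or> e = -1" and p: "\<not> (p1 = 0 \<and> p3 = 0)"
    and q1: "t * (p1 * p1 + p3 * p3) = 0" and q2: "b3 * f = h * p1 * p2"
    and q3: "b1 * f = - (h * p2 * p3)"
    and q4: "b2 * h * p3 - b3 * h * p2 = f * p1" and q5: "b1 * h * p2 - b2 * h * p1 = f * p3"
    and k1: "b1 * p3 = b3 * p1" and k2: "e * (b1 * p1 + b3 * p3) + b2 * p2 = 0"
    and k3: "e * (b1 * b1 + b3 * b3) + b2 * b2 = e * (p1 * p1 + p3 * p3)"
  shows "t = 0" "h = 0" "f = 0"
proof -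
  define s where "s = p1 * p1 + p3 * p3"
  have s: "s \<noteq> 0" unfolding s_def using p by (simp add: sum_squares_eq_zero_iff)
  have "t * s = 0" using q1 unfolding s_def .
  then show "t = 0" using s by simp
  have "(h * p2) * s = p1 * (b3 * f) - p3 * (b1 * f)"
    unfolding s_def q2 q3 by (simp add: algebra_simps)
  also have "\<dots> = f * (b3 * p1 - b1 * p3)" by (simp add: algebra_simps)
  finally have hp2: "h * p2 = 0" using k1 s by simp
  then have "b3 * h * p2 = 0" "b1 * h * p2 = 0" by (simp_all add: mult.assoc)
  then have q4': "b2 * h * p3 = f * p1" and q5': "- (b2 * h * p1) = f * p3"
    using q4 q5 by linarith+
  have "f * s = p1 * (b2 * h * p3) + p3 * (- (b2 * h * p1))"
    unfolding s_def q4' q5' by (simp add: algebra_simps)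
  then show f: "f = 0" using s by (simp add: algebra_simps)
  have "(b2 * h) * s = (b2 * h * p1) * p1 + (b2 * h * p3) * p3"
    unfolding s_def by (simp add: algebra_simps)
  also have "\<dots> = 0" using q4' q5' f by auto
  finally have b2h: "b2 * h = 0" using s by simp
  show "h = 0"
  proof (rule ccontr)
    assume "h \<noteq> 0"
    then have "b2 = 0" "p2 = 0" using b2h hp2 by simp_all
    then have k2': "b1 * p1 + b3 * p3 = 0" using k2 e by auto
    have k1': "b1 * p3 - b3 * p1 = 0" using k1 by simp
    have "b1 * s = p1 * (b1 * p1 + b3 * p3) + p3 * (b1 * p3 - b3 * p1)"
      "b3 * s = p3 * (b1 * p1 + b3 * p3) - p1 * (b1 * p3 - b3 * p1)"
      unfolding s_def by (simp_all add: algebra_simps)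
    then have "b1 * s = 0" "b3 * s = 0" unfolding k1' k2' by simp_all
    then have "b1 = 0" "b3 = 0" using s by simp_all
    then have "e * s = 0" using k3 \<open>b2 = 0\<close> unfolding s_def by simp
    then show False using e s by auto
  qed
qed

context integrable_frame
begin

abbreviation "p1 \<equiv> c1 Xp"
abbreviation "p2 \<equiv> c2 Xp"
abbreviation "p3 \<equiv> c3 Xp"

lemma Xp_coords: "e * p1 * p1 + p2 * p2 + e * p3 * p3 = 1"
  using p.gm_X_X unfolding gm_coords .

lemma aligned_case:
  assumes p: "p1 = 0" "p3 = 0"
  shows "h = 0" "f = 0" "Xp = Xm \<or> Xp = - Xm"
proof -
  define b where "b = Jp *v v1"
  have p2: "p2 * p2 = 1" using Xp_coords p by simp
  have "Xp = p2 *\<^sub>R Xm" using frame_combination_eqI[OF p(1) refl p(2)] by simp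
  then show "Xp = Xm \<or> Xp = - Xm" using p2 by (auto simp: square_eq_1_iff)
  have Xp_v1: "gm Gm Xp v1 = 0" using p by (simp add: gm_frame_right)
  have "gm Gm b v1 = 0" unfolding b_def by (rule p.gm_J_self)
  then have b1: "c1 b = 0" using e by (auto simp: gm_frame_right)
  have "gm Gm b Xp = 0" unfolding b_def using p.gm_J_X by simp
  then have b2: "c2 b = 0" using p2 p unfolding gm_coords by (auto simp: b1)
  have "gm Gm b b = e" unfolding b_def using p.gm_J_J[of v1 v1] Xp_v1 gm_commute[of v1 Xp] by (simp add: gm_frame)
  then have b3: "c3 b * c3 b = 1" unfolding gm_coords using b1 b2 e by auto
  have "c3 b * f = 0" "c3 b * h * p2 = 0"
    using P_derivation_plus_equations(2)[OF Xp_v1, of v1] P_derivation_plus_equations(1)[OF Xp_v1, of v1] p b1 b2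
    unfolding b_def[symmetric] by (simp_all add: pairing_dorfman_plus_coords field_simps)
  then show "h = 0" "f = 0" using b3 p2 by auto
qed

lemma oblique_case:
  assumes np: "\<not> (p1 = 0 \<and> p3 = 0)"
  shows "lam = 0" "h = 0" "f = 0"
proof -
  define a where "a = p3 *\<^sub>R v1 - p1 *\<^sub>R v3"
  have ca: "c1 a = p3" "c2 a = 0" "c3 a = - p1" by (simp_all add: a_def)
  have Xp_a: "gm Gm Xp a = 0" unfolding gm_coords ca by (simp add: algebra_simps)
  define b where "b = Jp *v a"
  have "gm Gm b a = 0" unfolding b_def by (rule p.gm_J_self)
  then have "e * (c1 b * p3 - c3 b * p1) = 0" unfolding gm_coords ca by (simp add: algebra_simps)
  then have k1: "c1 b * p3 = c3 b * p1" using e_cases by auto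
  have "gm Gm b Xp = 0" unfolding b_def using p.gm_J_X by simp
  then have k2: "e * (c1 b * p1 + c3 b * p3) + c2 b * p2 = 0" unfolding gm_coords by (simp add: algebra_simps)
  have "gm Gm b b = gm Gm a a" unfolding b_def using p.gm_J_J[of a a] Xp_a gm_commute[of a Xp] by simp
  then have k3: "e * (c1 b * c1 b + c3 b * c3 b) + c2 b * c2 b = e * (p1 * p1 + p3 * p3)"
    unfolding gm_coords ca by (simp add: algebra_simps)
  note eq1 = P_derivation_plus_equations(1)[OF Xp_a] and eq2 = P_derivation_plus_equations(2)[OF Xp_a]
  have "lam * (p1 * p1 + p3 * p3) = 0" using eq2[of Xm] unfolding b_def[symmetric]
    by (simp add: pairing_dorfman_plus_coords ca field_simps)
  moreover have "c3 b * f = h * p1 * p2" using eq2[of v1] unfolding b_def[symmetric]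
    by (simp add: pairing_dorfman_plus_coords ca field_simps)
  moreover have "c1 b * f = - (h * p2 * p3)" using eq2[of v3] unfolding b_def[symmetric]
    by (simp add: pairing_dorfman_plus_coords ca field_simps)
  moreover have "c2 b * h * p3 - c3 b * h * p2 = f * p1" using eq1[of v1] unfolding b_def[symmetric]
    by (simp add: pairing_dorfman_plus_coords ca field_simps)
  moreover have "c1 b * h * p2 - c2 b * h * p1 = f * p3" using eq1[of v3] unfolding b_def[symmetric]
    by (simp add: pairing_dorfman_plus_coords ca field_simps)
  ultimately show "lam = 0" "h = 0" "f = 0"
    using oblique_structure_equations[OF e_cases np _ _ _ _ _ k1 k2 k3] by blast+
qed

lemma abelian_if_lam_h_zero:
  assumes "lam = 0" "h = 0"
  shows "br x y = 0"
proof (rule gm_nondegenerate)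
  fix z
  have "gm Gm z (br x y) = 0" using assms gm_bracket_coords[of z x y] by simp
  then show "gm Gm (br x y) z = 0" by (metis gm_commute)
qed

lemma classification:
  "H = (\<lambda>x y z. 0) \<and> F = (\<lambda>x y. 0) \<and> (iso_frame br Gm Xp Xm \<or> (\<forall>x y. br x y = 0))"
proof -
  have "h = 0" "f = 0" using aligned_case oblique_case by blast+
  then have "H = (\<lambda>x y z. 0)" "F = (\<lambda>x y. 0)" by (simp_all add: H_coords F_coords fun_eq_iff)
  moreover have "iso_frame br Gm Xp Xm" if "lam \<noteq> 0"
  proof -
    have p: "p1 = 0" "p3 = 0" using oblique_case(1) that by blast+
    have "br v1 Xm = (gm Gm v3 v3 * lam) *\<^sub>R v3" "br Xm v3 = (gm Gm v1 v1 * lam) *\<^sub>R v1"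
      "br v3 v1 = 0" "gm Gm v1 v1 \<in> {1, -1}" "gm Gm v3 v3 \<in> {1, -1}"
      using frame_brackets \<open>h = 0\<close> e by (simp_all add: gm_frame)
    then show ?thesis
      unfolding iso_frame_def using that aligned_case(3)[OF p] gm_frame by blast
  qed
  ultimately show ?thesis using abelian_if_lam_h_zero \<open>h = 0\<close> by blast
qed

end

lemma pseudo_Kahler_imp_classification:
  assumes "lie_algebra3 br" "unimodular3 br" "components_ok Gm Jp Jm Xp Xm" "alt3 H" "alt2 F"
    and "Bn_gen_pseudo_Kahler br H F (std_gen_metric Gm) (struct_of_components Gm Jp Jm Xp Xm)"
  shows "H = (\<lambda>x y z. 0) \<and> F = (\<lambda>x y. 0) \<and> (iso_frame br Gm Xp Xm \<or> (\<forall>x y. br x y = 0))"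
proof -
  interpret components Gm Jp Jm Xp Xm using assms(3) by unfold_locales
  obtain v1 e where "gm Gm v1 Xm = 0" "gm Gm v1 v1 = e" "e = 1 \<or> e = -1"
    by (rule exists_unit_perp_Xm)
  then interpret integrable_frame Gm Jp Jm Xp Xm br H F v1 e
    using assms unfolding Bn_gen_pseudo_Kahler_def by unfold_locales auto
  show ?thesis by (rule classification)
qed

section \<open>Sufficiency\<close>

locale iso_components = components +
  fixes br :: "vec3 \<Rightarrow> vec3 \<Rightarrow> vec3" and v1 :: vec3 and e t :: real
  assumes lie: "lie_algebra3 br"
    and gm_v1_Xm: "gm Gm v1 Xm = 0" and gm_v1_v1: "gm Gm v1 v1 = e" and e_cases: "e = 1 \<or> e = -1"
    and Xp_Xm: "Xp = Xm \<or> Xp = - Xm"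
    and frame_brackets: "br v1 Xm = (e * t) *\<^sub>R (Jm *v v1)" "br Xm (Jm *v v1) = (e * t) *\<^sub>R v1"
      "br (Jm *v v1) v1 = 0"
begin

sublocale orthonormal_frame Gm v1 Xm "Jm *v v1" e
  using orthonormal_frame_Jm[OF gm_v1_Xm gm_v1_v1 e_cases] .

lemma bilinear_br: "bilinear br" and br_self: "br x x = 0"
  using lie unfolding lie_algebra3_def by auto

lemma gm_bracket_coords:
  "gm Gm z (br x y) = t * (c1 z * (c2 x * c3 y - c3 x * c2 y) + c3 z * (c1 x * c2 y - c2 x * c1 y))"
  using bracket_frame_coords[OF bilinear_br br_self frame_brackets(1,2), of 0] frame_brackets(3)
  by simp

lemma pairing_dorfman_untwisted:
  "pairing (dorfman br (\<lambda>x y z. 0) (\<lambda>x y. 0) (pm_section Gm A1 l1 B1) (pm_section Gm A2 l2 B2))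
      (pm_section Gm A3 l3 B3) =
    (gm Gm (A3 - B3) (br (A1 + B1) (A2 + B2)) - gm Gm (A2 - B2) (br (A1 + B1) (A3 + B3))
     + gm Gm (A1 - B1) (br (A2 + B2) (A3 + B3))) / 2"
proof -
  have "alt3 (\<lambda>x y z. 0::real)" "alt2 (\<lambda>x y. 0::real)"
    unfolding alt3_def alt2_def bilinear_def by (simp_all add: linear_zero)
  then show ?thesis using pairing_dorfman_pm_section[OF bilinear_br] by simp
qed

lemma integrable_P: "Bn_integrable br (\<lambda>x y z. 0) (\<lambda>x y. 0) P"
proof -
  obtain qp where qp: "qp * qp = 1" "\<And>x. c1 (Jp *v x) = - qp * c3 x"
    "\<And>x. c2 (Jp *v x) = 0" "\<And>x. c3 (Jp *v x) = qp * c1 x"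
    using almost_contact_frame_coords[OF p.almost_contact_metric_axioms Xp_Xm] by blast
  obtain qm where qm: "qm * qm = 1" "\<And>x. c1 (Jm *v x) = - qm * c3 x"
    "\<And>x. c2 (Jm *v x) = 0" "\<And>x. c3 (Jm *v x) = qm * c1 x"
    using almost_contact_frame_coords[OF m.almost_contact_metric_axioms] by blast
  define s where "s = c2 Xp"
  have s: "s * s = 1" "c1 Xp = 0" "c2 Xp = s" "c3 Xp = 0" "\<And>x. gm Gm Xp x = s * c2 x"
    using Xp_Xm by (auto simp: s_def gm_commute[of Xm] gm_frame_right)
  have sq: "qp * (qp * a) = a" "qm * (qm * a) = a" "s * (s * a) = a" for a
    using qp(1) qm(1) s(1) by (metis mult.assoc mult_1)+
  show ?thesis
  proof (rule Bn_integrableI)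
    fix u v
    show "pairing (dorfman br (\<lambda>x y z. 0) (\<lambda>x y. 0) (P u) (P v)
        - dorfman br (\<lambda>x y z. 0) (\<lambda>x y. 0) (P (P u)) (P (P v))) (pm_section Gm 0 0 Xm) = 0"
      apply (cases u rule: pm_section_cases, cases v rule: pm_section_cases)
      apply (simp only: pairing_diff_left P_P_pm_section P_pm_section pairing_dorfman_untwisted
          gm_diff_left gm_add_left gm_bracket_coords)
      apply (simp add: qp qm s sq algebra_simps)
      done
  next
    fix u v z
    show "pairing (dorfman br (\<lambda>x y z. 0) (\<lambda>x y. 0) (P (P u)) (P v)
        + dorfman br (\<lambda>x y z. 0) (\<lambda>x y. 0) (P u) (P (P v))) z
      + pairing (dorfman br (\<lambda>x y z. 0) (\<lambda>x y. 0) (P u) (P v)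
        - dorfman br (\<lambda>x y z. 0) (\<lambda>x y. 0) (P (P u)) (P (P v))) (P z) = 0"
      apply (cases u rule: pm_section_cases, cases v rule: pm_section_cases,
          cases z rule: pm_section_cases)
      apply (simp only: pairing_diff_left pairing_add_left P_P_pm_section P_pm_section
          pairing_dorfman_untwisted gm_diff_left gm_add_left gm_bracket_coords)
      apply (simp add: qp qm s sq field_simps)
      done
  qed
qed

end

context components
begin

lemma iso_frame_integrable:
  assumes lie: "lie_algebra3 br" and "iso_frame br Gm Xp Xm"
  shows "Bn_integrable br (\<lambda>x y z. 0) (\<lambda>x y. 0) P"
    and "Bn_integrable br (\<lambda>x y z. 0) (\<lambda>x y. 0) (std_gen_metric Gm \<circ> P)"
proof -
  obtain v1 v3 lam where o: "gm Gm v1 Xm = 0" "gm Gm v1 v3 = 0" "gm Gm Xm v3 = 0"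
      "gm Gm v1 v1 \<in> {1, -1}" "gm Gm v3 v3 \<in> {1, -1}"
    and br: "br v1 Xm = (gm Gm v3 v3 * lam) *\<^sub>R v3" "br v3 v1 = 0"
      "br Xm v3 = (gm Gm v1 v1 * lam) *\<^sub>R v1"
    and Xp_Xm: "Xp = Xm \<or> Xp = - Xm"
    using assms(2) unfolding iso_frame_def by blast
  define e where "e = gm Gm v1 v1"
  have e: "e = 1 \<or> e = -1" using o(4) unfolding e_def by auto
  interpret frame: orthonormal_frame Gm v1 Xm "Jm *v v1" e
    using orthonormal_frame_Jm[OF o(1) e_def[symmetric] e] .
  define q where "q = frame.c3 v3"
  have v3: "v3 = q *\<^sub>R (Jm *v v1)"
    using frame.frame_combination_eqI[of v3 0 0 q] o(2,3) gm_commute[of v1] gm_commute[of Xm]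
    unfolding q_def frame.c1_def frame.c2_def by simp
  have v3_v3: "gm Gm v3 v3 = q * q * e" unfolding v3 by (simp add: frame.gm_frame)
  then have "q * q = 1 \<or> q * q = -1" using o(5) e by auto
  then have qq: "q * q = 1" using zero_le_square[of q] by (elim disjE) linarith+
  then have e3: "gm Gm v3 v3 = e" using v3_v3 by simp
  have Jv1: "Jm *v v1 = q *\<^sub>R v3" using qq unfolding v3 by simp
  have bilinear_br: "bilinear br" using lie unfolding lie_algebra3_def by blast
  have brackets: "br v1 Xm = (e * (lam * q)) *\<^sub>R (Jm *v v1)"
    "br Xm (Jm *v v1) = (e * (lam * q)) *\<^sub>R v1" "br (Jm *v v1) v1 = 0"
    using br unfolding e3 e_def[symmetric] Jv1
    by (simp_all add: bilinear_rmul[OF bilinear_br] bilinear_lmul[OF bilinear_br] qq)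
  interpret i: iso_components Gm Jp Jm Xp Xm br v1 e "lam * q"
    using lie o(1) e_def e Xp_Xm brackets by unfold_locales auto
  interpret i': iso_components Gm Jp "- Jm" Xp Xm br v1 e "- (lam * q)"
    using components_ok_uminus_Jm[OF components] lie o(1) e_def e Xp_Xm brackets
    by unfold_locales (auto simp: bilinear_rneg[OF bilinear_br] bilinear_lneg[OF bilinear_br])
  show "Bn_integrable br (\<lambda>x y z. 0) (\<lambda>x y. 0) P" by (rule i.integrable_P)
  show "Bn_integrable br (\<lambda>x y z. 0) (\<lambda>x y. 0) (std_gen_metric Gm \<circ> P)"
    unfolding std_gen_metric_comp_P by (rule i'.integrable_P)
qed

end

lemma classification_imp_pseudo_Kahler:
  assumes "lie_algebra3 br" "components_ok Gm Jp Jm Xp Xm"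
    and "iso_frame br Gm Xp Xm \<or> (\<forall>x y. br x y = 0)"
  shows "Bn_gen_pseudo_Kahler br (\<lambda>x y z. 0) (\<lambda>x y. 0) (std_gen_metric Gm)
    (struct_of_components Gm Jp Jm Xp Xm)"
proof -
  interpret components Gm Jp Jm Xp Xm using assms(2) by unfold_locales
  interpret c': components Gm Jp "- Jm" Xp Xm
    using components_ok_uminus_Jm[OF assms(2)] by unfold_locales
  have "Bn_integrable br (\<lambda>x y z. 0) (\<lambda>x y. 0) P"
    "Bn_integrable br (\<lambda>x y z. 0) (\<lambda>x y. 0) (std_gen_metric Gm \<circ> P)"
    using assms(3) iso_frame_integrable[OF assms(1)] Bn_integrable_abelian c'.Bn_integrable_abelian
    unfolding std_gen_metric_comp_P by blast+
  then show ?thesis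
    unfolding Bn_gen_pseudo_Kahler_def
    using gen_metric_std_gen_metric Bn_gacs_P std_gen_metric_commute_P by blast
qed

theorem proposition7p2:
  fixes br :: "real^3 \<Rightarrow> real^3 \<Rightarrow> real^3"
    and Gm Jp Jm :: "real^3^3"
    and Xp Xm :: "real^3"
    and H :: "real^3 \<Rightarrow> real^3 \<Rightarrow> real^3 \<Rightarrow> real"
    and F :: "real^3 \<Rightarrow> real^3 \<Rightarrow> real"
  assumes lie: "lie_algebra3 br"
    and unimod: "unimodular3 br"
    and comps: "components_ok Gm Jp Jm Xp Xm"
    and Hform: "alt3 H"
    and Fform: "alt2 F"
    and Fclosed: "closed2 br F"
    and Ldiag: "diagonalizable3 (canonical_L br Gm)"
  shows "Bn_gen_pseudo_Kahler br H F (std_gen_metric Gm)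
            (struct_of_components Gm Jp Jm Xp Xm)
         \<longleftrightarrow>
         H = (\<lambda>x y z. 0) \<and> F = (\<lambda>x y. 0) \<and>
         ((\<exists>v1 v2 v3 (lam::real).
              gm Gm v1 v2 = 0 \<and> gm Gm v1 v3 = 0 \<and> gm Gm v2 v3 = 0 \<and>
              gm Gm v1 v1 \<in> {1, -1} \<and> gm Gm v3 v3 \<in> {1, -1} \<and> gm Gm v2 v2 = 1 \<and>
              lam \<noteq> 0 \<and>
              br v1 v2 = (gm Gm v3 v3 * lam) *\<^sub>R v3 \<and>
              br v3 v1 = 0 \<and>
              br v2 v3 = (gm Gm v1 v1 * lam) *\<^sub>R v1 \<and>
              Xm = v2 \<and> (Xp = Xm \<or> Xp = - Xm))
          \<or> (\<forall>x y. br x y = 0))"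
  unfolding iso_frame_def[symmetric]
  using pseudo_Kahler_imp_classification[OF lie unimod comps Hform Fform]
    classification_imp_pseudo_Kahler[OF lie comps]
  by blast

end
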